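(* Let $\Gamma$ be a finite alphabet and $D,\ell$ positive integers. Let $H:\Gamma^2\to\{0,1\}$ be distributed as a $(D,\ell)$-iterated pair-wise independent function. Then for any $ab\in\Gamma^2$, $\frac{1}{2D}\le\Pr_H[H(ab)=0]\le\frac{1}{D}$. Furthermore, for any $S\subseteq\Gamma^2$ with $|S|=\ell D$, $\Pr_H[\forall ab\in S,\ H(ab)\ne 0]\le 1/2^{\ell}$.
   Context: A family $\mathcal{H}$ of functions $h:U\to V$ is pair-wise independent if for all $u\ne u'$ in $U$ and $v,v'\in V$, $\Pr_h[h(u)=v\wedge h(u')=v']=1/|V|^2$ for $h$ uniform in $\mathcal{H}$. $H:\Gamma^2\to\{0,1\}$ is a $(D,\ell)$-iterated pair-wise independent function if it is obtained by selecting independently at random functions $h_1,\dots,h_\ell:\Gamma^2\to\{0,\dots,\ell D-1\}$, each from a pair-wise independent hash system, and setting $H(ab)=0$ if $\prod_{i=1}^{\ell}h_i(ab)=0$ and $H(ab)=1$ otherwise. *)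

theory Defs
  imports "HOL-Probability.Probability"
begin

definition pairwise_indep_family :: "'a set \<Rightarrow> 'b set \<Rightarrow> ('a \<Rightarrow> 'b) set \<Rightarrow> bool" where
  "pairwise_indep_family U V Hs \<longleftrightarrow>
     finite Hs \<and> Hs \<noteq> {} \<and> (\<forall>h\<in>Hs. \<forall>u\<in>U. h u \<in> V) \<and>
     (\<forall>u\<in>U. \<forall>u'\<in>U. u \<noteq> u' \<longrightarrow> (\<forall>v\<in>V. \<forall>v'\<in>V.
        measure (pmf_of_set Hs) {h. h u = v \<and> h u' = v'} = 1 / (real (card V))^2))"

definition iterated_pi_dist :: "nat \<Rightarrow> (nat \<Rightarrow> ('a \<Rightarrow> nat) set) \<Rightarrow> ('a \<Rightarrow> nat) pmf" where
  "iterated_pi_dist l Hs =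
     map_pmf (\<lambda>hs x. if (\<Prod>i\<in>{1..l}. hs i x) = 0 then 0 else 1)
       (Pi_pmf {1..l} undefined (\<lambda>i. pmf_of_set (Hs i)))"

end

theory Submission
  imports Defs
begin

text \<open>At a fixed point each \<open>h\<^sub>i\<close> vanishes with probability exactly \<open>1/(lD)\<close>
  (sum the pair-wise law over the second value), so \<open>H(ab) \<noteq> 0\<close> with
  probability \<open>(1 - 1/(lD))\<^sup>l\<close>, and Bernoulli's inequality puts
  \<open>1 - (1 - 1/(lD))\<^sup>l\<close> between \<open>1/(D+1)\<close> and \<open>1/D\<close>.
  For \<open>|S| = lD\<close>, the number \<open>K\<close> of zeros of one \<open>h\<^sub>i\<close> on \<open>S\<close> has
  mean \<open>1\<close> and second moment \<open>2 - 1/(lD)\<close> by pair-wise independence; as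
  \<open>[K = 0] \<le> (K - 1)(K - 2)/2\<close> on the integers, \<open>h\<^sub>i\<close> avoids \<open>0\<close> on \<open>S\<close>
  with probability at most \<open>1/2\<close>, and independence of the \<open>h\<^sub>i\<close> gives \<open>2\<^sup>-\<^sup>l\<close>.\<close>

lemma measure_pmf_of_set_Collect:
  assumes "finite A" "A \<noteq> {}"
  shows "measure (pmf_of_set A) {x. P x} = (\<Sum>x\<in>A. of_bool (P x)) / real (card A)"
  using assms by (simp add: measure_pmf_of_set Int_def)

lemma measure_pmf_Collect_not:
  "measure (measure_pmf M) {x. \<not> P x} = 1 - measure (measure_pmf M) {x. P x}"
  using measure_pmf.prob_neg[of M P] by simp

lemma pairwise_indep_family_pair_count:
  assumes "pairwise_indep_family U V Hs" "u \<in> U" "u' \<in> U" "u \<noteq> u'" "v \<in> V" "v' \<in> V"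
  shows "(\<Sum>h\<in>Hs. of_bool (h u = v \<and> h u' = v')) = real (card Hs) / (real (card V))\<^sup>2"
proof -
  have "finite Hs" "Hs \<noteq> {}"
    and "measure (pmf_of_set Hs) {h. h u = v \<and> h u' = v'} = 1 / (real (card V))\<^sup>2"
    using assms by (auto simp: pairwise_indep_family_def)
  then show ?thesis
    by (simp add: measure_pmf_of_set_Collect field_simps card_gt_0_iff)
qed

lemma pairwise_indep_family_marginal_count:
  assumes family: "pairwise_indep_family U V Hs" and "finite V" "\<not> is_singleton U" "u \<in> U" "v \<in> V"
  shows "(\<Sum>h\<in>Hs. of_bool (h u = v)) = real (card Hs) / real (card V)"
proof -
  obtain u' where u': "u' \<in> U" "u \<noteq> u'"
    using assms(3,4) is_singleton_iff_ex1 by metis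
  have range: "h u' \<in> V" if "h \<in> Hs" for h
    using family u'(1) that by (auto simp: pairwise_indep_family_def)
  have "(\<Sum>v'\<in>V. of_bool (h u = v \<and> h u' = v')) = (of_bool (h u = v) :: real)" if "h \<in> Hs" for h
    using range[OF that] \<open>finite V\<close> by (cases "h u = v") (simp_all add: of_bool_def)
  then have "(\<Sum>h\<in>Hs. of_bool (h u = v)) = (\<Sum>h\<in>Hs. \<Sum>v'\<in>V. of_bool (h u = v \<and> h u' = v') :: real)"
    by simp
  also have "\<dots> = (\<Sum>v'\<in>V. \<Sum>h\<in>Hs. of_bool (h u = v \<and> h u' = v'))"
    by (rule sum.swap)
  also have "\<dots> = real (card V) * (real (card Hs) / (real (card V))\<^sup>2)"
    using pairwise_indep_family_pair_count[OF family \<open>u \<in> U\<close> u'(1,2) \<open>v \<in> V\<close>] by simp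
  finally show ?thesis
    by (simp add: power2_eq_square)
qed

lemma pairwise_indep_family_marginal:
  assumes "pairwise_indep_family U V Hs" "finite V" "\<not> is_singleton U" "u \<in> U" "v \<in> V"
  shows "measure (pmf_of_set Hs) {h. h u = v} = 1 / real (card V)"
proof -
  have "finite Hs" "Hs \<noteq> {}"
    using assms(1) by (auto simp: pairwise_indep_family_def)
  then show ?thesis
    using pairwise_indep_family_marginal_count[OF assms]
    by (simp add: measure_pmf_of_set_Collect card_gt_0_iff)
qed

lemma pairwise_indep_family_first_moment:
  assumes "pairwise_indep_family U V Hs" "finite V" "\<not> is_singleton U" "S \<subseteq> U" "v \<in> V"
  shows "(\<Sum>h\<in>Hs. \<Sum>u\<in>S. of_bool (h u = v)) = real (card S) * real (card Hs) / real (card V)"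
proof -
  have "(\<Sum>h\<in>Hs. \<Sum>u\<in>S. of_bool (h u = v)) = (\<Sum>u\<in>S. \<Sum>h\<in>Hs. of_bool (h u = v) :: real)"
    by (rule sum.swap)
  also have "\<dots> = (\<Sum>u\<in>S. real (card Hs) / real (card V))"
    using assms by (intro sum.cong) (auto intro: pairwise_indep_family_marginal_count)
  finally show ?thesis
    by simp
qed

lemma pairwise_indep_family_second_moment:
  assumes family: "pairwise_indep_family U V Hs" and "finite V" "\<not> is_singleton U"
    and "S \<subseteq> U" "finite S" "v \<in> V"
  shows "(\<Sum>h\<in>Hs. (\<Sum>u\<in>S. of_bool (h u = v))\<^sup>2) =
    real (card Hs) *
      (real (card S) / real (card V) + real (card S) * (real (card S) - 1) / (real (card V))\<^sup>2)"
proof -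
  define c where "c = real (card Hs)"
  define N where "N = real (card V)"
  have row: "(\<Sum>u'\<in>S. \<Sum>h\<in>Hs. of_bool (h u = v) * of_bool (h u' = v)) =
      c / N + (real (card S) - 1) * (c / N\<^sup>2)"
    if "u \<in> S" for u
  proof -
    have diagonal: "(\<Sum>h\<in>Hs. of_bool (h u = v) * of_bool (h u = v)) = c / N"
      using pairwise_indep_family_marginal_count[OF family assms(2,3) _ assms(6), of u] that assms(4)
      by (auto simp: c_def N_def simp flip: of_bool_conj)
    have off_diagonal: "(\<Sum>h\<in>Hs. of_bool (h u = v) * of_bool (h u' = v)) = c / N\<^sup>2"
      if "u' \<in> S - {u}" for u'
      using pairwise_indep_family_pair_count[OF family, of u u' v v] that \<open>u \<in> S\<close> assms(4,6)
      by (auto simp: c_def N_def simp flip: of_bool_conj)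
    have "(\<Sum>u'\<in>S. \<Sum>h\<in>Hs. of_bool (h u = v) * of_bool (h u' = v)) =
        (\<Sum>h\<in>Hs. of_bool (h u = v) * of_bool (h u = v)) +
        (\<Sum>u'\<in>S - {u}. \<Sum>h\<in>Hs. of_bool (h u = v) * of_bool (h u' = v))"
      using \<open>finite S\<close> that by (rule sum.remove)
    also have "\<dots> = c / N + (real (card S) - 1) * (c / N\<^sup>2)"
      using diagonal off_diagonal that \<open>finite S\<close> card_gt_0_iff[of S] by (auto simp: of_nat_diff)
    finally show ?thesis .
  qed
  have "(\<Sum>h\<in>Hs. (\<Sum>u\<in>S. of_bool (h u = v))\<^sup>2) =
      (\<Sum>h\<in>Hs. \<Sum>u\<in>S. \<Sum>u'\<in>S. of_bool (h u = v) * of_bool (h u' = v) :: real)"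
    by (simp add: power2_eq_square sum_product)
  also have "\<dots> = (\<Sum>u\<in>S. \<Sum>h\<in>Hs. \<Sum>u'\<in>S. of_bool (h u = v) * of_bool (h u' = v))"
    by (rule sum.swap)
  also have "\<dots> = (\<Sum>u\<in>S. \<Sum>u'\<in>S. \<Sum>h\<in>Hs. of_bool (h u = v) * of_bool (h u' = v))"
    by (rule sum.cong[OF refl], rule sum.swap)
  also have "\<dots> = real (card S) * (c / N + (real (card S) - 1) * (c / N\<^sup>2))"
    using row by simp
  finally show ?thesis
    by (simp add: c_def N_def field_simps)
qed

lemma of_bool_eq_0_le: "of_bool (n = 0) \<le> (real n - 1) * (real n - 2) / 2"
proof -
  consider "n = 0" | "n = 1" | "n \<ge> 2"
    by linarith
  then show ?thesis
  proof cases
    case 3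
    then have "real n - 1 \<ge> 0" "real n - 2 \<ge> 0"
      by auto
    with 3 show ?thesis
      by simp
  qed auto
qed

lemma pairwise_indep_family_avoid_value:
  assumes family: "pairwise_indep_family U V Hs" and "finite V" "\<not> is_singleton U"
    and "S \<subseteq> U" "card S = card V" "v \<in> V"
  shows "measure (pmf_of_set Hs) {h. \<forall>u\<in>S. h u \<noteq> v} \<le> 1 / 2"
proof -
  have Hs: "finite Hs" "Hs \<noteq> {}"
    using family by (auto simp: pairwise_indep_family_def)
  define c where "c = real (card Hs)"
  define N where "N = real (card V)"
  have "c > 0" "N > 0"
    using Hs \<open>finite V\<close> \<open>v \<in> V\<close> by (auto simp: c_def N_def card_gt_0_iff)
  have "finite S"
    using \<open>card S = card V\<close> \<open>N > 0\<close> card_ge_0_finite by (force simp: N_def)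
  define K where "K h = (\<Sum>u\<in>S. of_bool (h u = v) :: real)" for h :: "'a \<Rightarrow> 'b"
  have indicator_le: "of_bool (\<forall>u\<in>S. h u \<noteq> v) \<le> (K h - 1) * (K h - 2) / 2" for h
  proof -
    have "K h = real (card (S \<inter> {u. h u = v}))"
      using \<open>finite S\<close> by (simp add: K_def)
    moreover have "(\<forall>u\<in>S. h u \<noteq> v) \<longleftrightarrow> card (S \<inter> {u. h u = v}) = 0"
      using \<open>finite S\<close> by auto
    ultimately show ?thesis
      using of_bool_eq_0_le[of "card (S \<inter> {u. h u = v})"] by simp
  qed
  have first: "(\<Sum>h\<in>Hs. K h) = c"
    using pairwise_indep_family_first_moment[OF family \<open>finite V\<close> assms(3,4,6)]
      \<open>card S = card V\<close> \<open>N > 0\<close> by (simp add: K_def c_def N_def)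
  have "(\<Sum>h\<in>Hs. (K h)\<^sup>2) = c * (N / N + N * (N - 1) / N\<^sup>2)"
    using pairwise_indep_family_second_moment[OF family \<open>finite V\<close> assms(3,4) \<open>finite S\<close> assms(6)]
      \<open>card S = card V\<close> by (simp add: K_def c_def N_def)
  also have "N / N + N * (N - 1) / N\<^sup>2 = 2 - 1 / N"
    using \<open>N > 0\<close> by (simp add: field_simps power2_eq_square)
  finally have second: "(\<Sum>h\<in>Hs. (K h)\<^sup>2) = c * (2 - 1 / N)" .
  have "(\<Sum>h\<in>Hs. of_bool (\<forall>u\<in>S. h u \<noteq> v)) \<le> (\<Sum>h\<in>Hs. (K h - 1) * (K h - 2) / 2)"
    by (rule sum_mono) (rule indicator_le)
  also have "\<dots> = (\<Sum>h\<in>Hs. (K h)\<^sup>2 - 3 * K h + 2) / 2"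
    by (simp add: sum_divide_distrib power2_eq_square algebra_simps)
  also have "(\<Sum>h\<in>Hs. (K h)\<^sup>2 - 3 * K h + 2) = (\<Sum>h\<in>Hs. (K h)\<^sup>2) - 3 * (\<Sum>h\<in>Hs. K h) + 2 * c"
    by (simp add: sum.distrib sum_subtractf sum_distrib_left c_def)
  also have "\<dots> = c * (1 - 1 / N)"
    by (simp add: first second algebra_simps)
  also have "c * (1 - 1 / N) / 2 \<le> c / 2"
    using \<open>c > 0\<close> \<open>N > 0\<close> by simp
  finally show ?thesis
    using Hs \<open>c > 0\<close> by (simp add: measure_pmf_of_set_Collect c_def divide_le_eq)
qed

lemma one_minus_power_le:
  fixes p :: real
  assumes "p \<le> 1"
  shows "1 - (1 - p) ^ n \<le> real n * p"
  using Bernoulli_inequality[of "- p" n] assms by simp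

lemma one_minus_power_ge:
  fixes p :: real
  assumes "0 \<le> p" "p \<le> 1"
  shows "real n * p / (1 + real n * p) \<le> 1 - (1 - p) ^ n"
proof -
  have "(1 - p) ^ n * (1 + real n * p) \<le> (1 - p) ^ n * (1 + p) ^ n"
    using Bernoulli_inequality[of p n] assms by (intro mult_left_mono) auto
  also have "\<dots> = (1 - p\<^sup>2) ^ n"
    by (simp flip: power_mult_distrib add: power2_eq_square algebra_simps)
  also have "\<dots> \<le> 1"
    using assms by (intro power_le_one) (auto simp: power_le_one)
  finally have "(1 - p) ^ n * (1 + real n * p) \<le> 1" .
  moreover have "0 < 1 + real n * p"
    using assms by (simp add: add_pos_nonneg)
  ultimately have "(1 - p) ^ n \<le> 1 / (1 + real n * p)"
    by (simp add: le_divide_eq)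
  moreover have "1 - 1 / (1 + real n * p) = real n * p / (1 + real n * p)"
    using \<open>0 < 1 + real n * p\<close> by (simp add: field_simps)
  ultimately show ?thesis
    by linarith
qed

lemma one_minus_power_inverse_bounds:
  assumes "D > 0" "l > 0"
  shows "1 / (2 * real D) \<le> 1 - (1 - 1 / real (l * D)) ^ l \<and>
    1 - (1 - 1 / real (l * D)) ^ l \<le> 1 / real D"
proof -
  define p where "p = 1 / real (l * D)"
  have "1 \<le> real (l * D)"
    using assms by (simp del: of_nat_mult)
  then have "0 \<le> p" "p \<le> 1"
    by (simp_all add: p_def del: of_nat_mult)
  have lp: "real l * p = 1 / real D"
    using assms(2) by (simp add: p_def)
  have "1 / (2 * real D) \<le> 1 / (real D + 1)"
    using assms(1) by (simp add: field_simps)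
  also have "\<dots> = real l * p / (1 + real l * p)"
    using assms(1) unfolding lp by (simp add: field_simps)
  also have "\<dots> \<le> 1 - (1 - p) ^ l"
    using \<open>0 \<le> p\<close> \<open>p \<le> 1\<close> by (rule one_minus_power_ge)
  finally show ?thesis
    unfolding p_def[symmetric] using one_minus_power_le[OF \<open>p \<le> 1\<close>, of l] lp by simp
qed

lemma measure_iterated_pi_dist_nonzero:
  fixes Hs :: "nat \<Rightarrow> ('a \<Rightarrow> nat) set"
  shows "measure (iterated_pi_dist l Hs) {H. \<forall>x\<in>S. H x \<noteq> 0} =
     (\<Prod>i\<in>{1..l}. measure (pmf_of_set (Hs i)) {h. \<forall>x\<in>S. h x \<noteq> 0})"
proof -
  have "(\<lambda>(hs :: nat \<Rightarrow> 'a \<Rightarrow> nat) x. if (\<Prod>i\<in>{1..l}. hs i x) = 0 then 0 else 1 :: nat) -`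
      {H. \<forall>x\<in>S. H x \<noteq> 0} =
      Pi {1..l} (\<lambda>i. {h. \<forall>x\<in>S. h x \<noteq> 0})"
    by (auto simp: Pi_iff)
  then show ?thesis
    by (simp add: iterated_pi_dist_def measure_Pi_pmf_Pi)
qed

lemma measure_iterated_pi_dist_nonzero_le:
  fixes Hs :: "nat \<Rightarrow> ('a \<Rightarrow> nat) set"
  assumes "\<And>i. i \<in> {1..l} \<Longrightarrow> measure (pmf_of_set (Hs i)) {h. \<forall>x\<in>S. h x \<noteq> 0} \<le> q"
  shows "measure (iterated_pi_dist l Hs) {H. \<forall>x\<in>S. H x \<noteq> 0} \<le> q ^ l"
proof -
  have "measure (iterated_pi_dist l Hs) {H. \<forall>x\<in>S. H x \<noteq> 0} =
      (\<Prod>i\<in>{1..l}. measure (pmf_of_set (Hs i)) {h. \<forall>x\<in>S. h x \<noteq> 0})"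
    by (rule measure_iterated_pi_dist_nonzero)
  also have "\<dots> \<le> (\<Prod>i\<in>{1..l}. q)"
    using assms by (intro prod_mono) auto
  finally show ?thesis
    by simp
qed

lemma measure_iterated_pi_dist_zero:
  "measure (iterated_pi_dist l Hs) {H. H x = 0} =
     1 - (\<Prod>i\<in>{1..l}. 1 - measure (pmf_of_set (Hs i)) {h. h x = 0})"
  using measure_iterated_pi_dist_nonzero[of l Hs "{x}"]
  by (simp add: measure_pmf_Collect_not[where P = "\<lambda>h. h x \<noteq> 0", simplified])

theorem proposition6:
  fixes Hs :: "nat \<Rightarrow> ('g::finite \<times> 'g \<Rightarrow> nat) set" and D l :: nat
  assumes "D > 0" and "l > 0" and "CARD('g) \<ge> 2"
    and "\<forall>i\<in>{1..l}. pairwise_indep_family (UNIV :: ('g \<times> 'g) set) {0..<l * D} (Hs i)"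
  shows "(\<forall>ab :: 'g \<times> 'g.
           1 / (2 * real D) \<le> measure (iterated_pi_dist l Hs) {H. H ab = 0} \<and>
           measure (iterated_pi_dist l Hs) {H. H ab = 0} \<le> 1 / real D) \<and>
         (\<forall>S :: ('g \<times> 'g) set. card S = l * D \<longrightarrow>
           measure (iterated_pi_dist l Hs) {H. \<forall>ab\<in>S. H ab \<noteq> 0} \<le> 1 / 2 ^ l)"
proof -
  have nontrivial: "\<not> is_singleton (UNIV :: ('g \<times> 'g) set)"
    using assms(3) by (simp add: is_singleton_altdef flip: UNIV_Times_UNIV)
  have zero_in_range: "0 \<in> {0..<l * D}"
    using assms(1,2) by simp
  have "measure (iterated_pi_dist l Hs) {H. H ab = 0} = 1 - (1 - 1 / real (l * D)) ^ l" for ab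
    using pairwise_indep_family_marginal[OF _ _ nontrivial _ zero_in_range] assms(4)
    by (simp add: measure_iterated_pi_dist_zero)
  moreover have "measure (iterated_pi_dist l Hs) {H. \<forall>ab\<in>S. H ab \<noteq> 0} \<le> (1 / 2) ^ l"
    if "card S = l * D" for S
    using pairwise_indep_family_avoid_value[OF _ _ nontrivial _ _ zero_in_range] assms(4) that
    by (intro measure_iterated_pi_dist_nonzero_le) auto
  ultimately show ?thesis
    using one_minus_power_inverse_bounds[OF assms(1,2)] by (simp add: power_one_over)
qed

end
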